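(* Let $m=2^{e_1}p_2^{e_2}\cdots p_r^{e_r}$ with $e_1\ge0$, $p_j$ distinct odd primes and $e_j\ge1$, and let $m_0$ be the squarefree part of $m/2^{e_1}$. Then for every real $s>1/2$, $\mathbb E(\mathbb X_s(m))=h_m(s)$. Furthermore, \[\mathbb E(\mathbb X_\infty(m))=\frac{(-1)^{\omega(m_0)}}{m_0}\prod_{2\le j\le r,\ e_j\text{ even}}\Bigl(1-\frac2{p_j}\Bigr)\frac{a(m)}4.\]
   Context: $\omega(m_0)$ is the number of prime factors of $m_0$; $a(m)=4$ if $m$ is odd and $a(m)=2(-1)^{e_1}$ otherwise. For real $s>1/2$, $(\mathbb X_s(p))_p$ are independent random variables indexed by primes with, for odd $p$, $\mathbb P(\mathbb X_s(p)=1)=a_p(s):=\frac{p-3}{2p}+\frac{2}{p(p^s+1)}$, $\mathbb P(\mathbb X_s(p)=-1)=b_p(s):=\frac{p-1}{2p}$, $\mathbb P(\mathbb X_s(p)=0)=c_p(s):=1-a_p(s)-b_p(s)=1-\frac1p\bigl(p-2+\frac2{p^s+1}\bigr)$; and $\mathbb P(\mathbb X_s(2)=1)=\frac1{8^s+2^s+2}$, $\mathbb P(\mathbb X_s(2)=-1)=\frac12\frac{8^s-4^s+2}{8^s+2^s+2}$, $\mathbb P(\mathbb X_s(2)=0)=\frac{2^{s-1}(4^s+2^s+2)}{8^s+2^s+2}$. $(\mathbb X_\infty(p))_p$ are independent with, for odd $p$, $\mathbb P(\mathbb X_\infty(p)=1)=\frac{p-3}{2p}$, $\mathbb P(\mathbb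 X_\infty(p)=-1)=\frac{p-1}{2p}$, $\mathbb P(\mathbb X_\infty(p)=0)=\frac2p$, and $\mathbb P(\mathbb X_\infty(2)=1)=0$, $\mathbb P(\mathbb X_\infty(2)=\pm\text{}-1)=\mathbb P(\mathbb X_\infty(2)=0)=\frac12$ (i.e. $\mathbb P(\mathbb X_\infty(2)=-1)=\frac12$). Both families are extended totally multiplicatively: value $1$ at $n=1$ and $\prod_{p^e\|n}(\cdot)(p)^e$. Finally \[h_m(s)=\frac{(-1)^{\omega(m_0)}}{m_0}\,\frac{\prod_{2\le j\le r,\ e_j\text{ even}}\bigl(1-\frac2{p_j}\bigr)\bigl(1+\frac{2(p_j-1)}{(p_j-2)(p_j^s-1)}\bigr)}{\prod_{p\mid m}\bigl(1+\frac2{p^s-1}\bigr)}\,\tilde\kappa(m,s),\] where $\tilde\kappa(m,s)=1$ if $m$ is odd and $\tilde\kappa(m,s)=\frac{(-1)^{e_1}}2\frac{8^s+4^s}{8^s+2^s+2}\bigl(1+\frac{2(1+(-1)^{e_1})}{4^s(2^s-1)}\bigr)$ if $m$ is even. *)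

theory Defs
  imports "HOL-Probability.Probability" "HOL-Computational_Algebra.Primes"
begin

definition pXs_one :: "real \<Rightarrow> nat \<Rightarrow> real" where
  "pXs_one s p = (if p = 2 then 1 / (8 powr s + 2 powr s + 2)
     else (real p - 3) / (2 * real p) + 2 / (real p * (real p powr s + 1)))"

definition pXs_mone :: "real \<Rightarrow> nat \<Rightarrow> real" where
  "pXs_mone s p = (if p = 2 then (1/2) * (8 powr s - 4 powr s + 2) / (8 powr s + 2 powr s + 2)
     else (real p - 1) / (2 * real p))"

definition pXs_zero :: "real \<Rightarrow> nat \<Rightarrow> real" where
  "pXs_zero s p = (if p = 2 then 2 powr (s - 1) * (4 powr s + 2 powr s + 2) / (8 powr s + 2 powr s + 2)
     else 1 - (1 / real p) * (real p - 2 + 2 / (real p powr s + 1)))"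

definition pXi_one :: "nat \<Rightarrow> real" where
  "pXi_one p = (if p = 2 then 0 else (real p - 3) / (2 * real p))"

definition pXi_mone :: "nat \<Rightarrow> real" where
  "pXi_mone p = (if p = 2 then 1/2 else (real p - 1) / (2 * real p))"

definition pXi_zero :: "nat \<Rightarrow> real" where
  "pXi_zero p = (if p = 2 then 1/2 else 2 / real p)"

definition Xs_model :: "'a measure \<Rightarrow> real \<Rightarrow> (nat \<Rightarrow> 'a \<Rightarrow> real) \<Rightarrow> bool" where
  "Xs_model M s X \<longleftrightarrow> prob_space M \<and>
     prob_space.indep_vars M (\<lambda>_. borel) X {p. prime p} \<and>
     (\<forall>p. prime p \<longrightarrow>
        measure M {\<omega> \<in> space M. X p \<omega> = 1} = pXs_one s p \<and>
        measure M {\<omega> \<in> space M. X p \<omega> = -1} = pXs_mone s p \<and>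
        measure M {\<omega> \<in> space M. X p \<omega> = 0} = pXs_zero s p)"

definition Xinf_model :: "'a measure \<Rightarrow> (nat \<Rightarrow> 'a \<Rightarrow> real) \<Rightarrow> bool" where
  "Xinf_model M X \<longleftrightarrow> prob_space M \<and>
     prob_space.indep_vars M (\<lambda>_. borel) X {p. prime p} \<and>
     (\<forall>p. prime p \<longrightarrow>
        measure M {\<omega> \<in> space M. X p \<omega> = 1} = pXi_one p \<and>
        measure M {\<omega> \<in> space M. X p \<omega> = -1} = pXi_mone p \<and>
        measure M {\<omega> \<in> space M. X p \<omega> = 0} = pXi_zero p)"

definition Xmult :: "(nat \<Rightarrow> 'a \<Rightarrow> real) \<Rightarrow> nat \<Rightarrow> 'a \<Rightarrow> real" where
  "Xmult X n \<omega> = (\<Prod>p\<in>prime_factors n. X p \<omega> ^ multiplicity p n)"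

definition sqfree_part :: "nat \<Rightarrow> nat" where
  "sqfree_part n = (\<Prod>p\<in>{p \<in> prime_factors n. odd (multiplicity p n)}. p)"

definition m0 :: "nat \<Rightarrow> nat" where
  "m0 m = sqfree_part (m div 2 ^ multiplicity 2 m)"

definition omega :: "nat \<Rightarrow> nat" where
  "omega n = card (prime_factors n)"

definition even_odd_primes :: "nat \<Rightarrow> nat set" where
  "even_odd_primes m = {p \<in> prime_factors m. p \<noteq> 2 \<and> even (multiplicity p m)}"

definition a_fun :: "nat \<Rightarrow> real" where
  "a_fun m = (if odd m then 4 else 2 * (-1) ^ multiplicity 2 m)"

definition kappa_t :: "nat \<Rightarrow> real \<Rightarrow> real" where
  "kappa_t m s = (if odd m then 1 else
     ((-1) ^ multiplicity 2 m / 2) * ((8 powr s + 4 powr s) / (8 powr s + 2 powr s + 2)) *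
     (1 + 2 * (1 + (-1) ^ multiplicity 2 m) / (4 powr s * (2 powr s - 1))))"

definition h_fun :: "nat \<Rightarrow> real \<Rightarrow> real" where
  "h_fun m s = ((-1) ^ omega (m0 m) / real (m0 m)) *
     ((\<Prod>p\<in>even_odd_primes m. (1 - 2 / real p) *
          (1 + 2 * (real p - 1) / ((real p - 2) * (real p powr s - 1))))
      / (\<Prod>p\<in>prime_factors m. 1 + 2 / (real p powr s - 1))) *
     kappa_t m s"

end

theory Submission
  imports Defs
begin

text \<open>
  By independence, E X(m) is the product over p^e || m of E X(p)^e, and since X(p) only takes
  the values 1, -1, 0, each factor is P(X(p) = 1) + (-1)^e P(X(p) = -1).  Multiplied by
  1 + 2/(p^s - 1), this factor becomes -1/p for odd p with e odd, (1 - 2/p)(1 + 2(p-1)/((p-2)(p^s-1)))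
  for odd p with e even, and the tilde-kappa factor for p = 2.  The factors -1/p multiply to
  (-1)^omega(m_0)/m_0, because m_0 is the product of the odd primes dividing m to an odd power.
  For X_infinity the same computation gives -1/p, 1 - 2/p and (-1)^e_1/2 = a(m)/4.
\<close>

lemma (in prob_space) integral_power_ternary:
  fixes Z :: "'a \<Rightarrow> real"
  assumes [measurable]: "Z \<in> borel_measurable M"
    and total: "prob {\<omega>\<in>space M. Z \<omega> = 1} + prob {\<omega>\<in>space M. Z \<omega> = -1}
                + prob {\<omega>\<in>space M. Z \<omega> = 0} = 1"
    and "e > 0"
  shows "integrable M (\<lambda>\<omega>. Z \<omega> ^ e)"
    and "integral\<^sup>L M (\<lambda>\<omega>. Z \<omega> ^ e)
           = prob {\<omega>\<in>space M. Z \<omega> = 1} + (-1) ^ e * prob {\<omega>\<in>space M. Z \<omega> = -1}"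
proof -
  define A1 where "A1 = {\<omega>\<in>space M. Z \<omega> = 1}"
  define A2 where "A2 = {\<omega>\<in>space M. Z \<omega> = -1}"
  define A0 where "A0 = {\<omega>\<in>space M. Z \<omega> = 0}"
  have [measurable]: "A1 \<in> events" "A2 \<in> events" "A0 \<in> events"
    unfolding A1_def A2_def A0_def by measurable
  have "prob (A1 \<union> A2 \<union> A0) = prob (A1 \<union> A2) + prob A0"
    by (rule finite_measure_Union) (auto simp: A1_def A2_def A0_def)
  also have "prob (A1 \<union> A2) = prob A1 + prob A2"
    by (rule finite_measure_Union) (auto simp: A1_def A2_def)
  finally have "prob (A1 \<union> A2 \<union> A0) = 1"
    using total by (simp add: A1_def A2_def A0_def)
  then have "AE \<omega> in M. \<omega> \<in> A1 \<union> A2 \<union> A0"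
    by (subst AE_in_set_eq_1) auto
  then have AE_eq: "AE \<omega> in M. indicator A1 \<omega> + (-1) ^ e * indicator A2 \<omega> = Z \<omega> ^ e"
    by eventually_elim (use \<open>e > 0\<close> in \<open>auto simp: A1_def A2_def A0_def\<close>)
  have int: "integrable M (\<lambda>\<omega>. indicator A1 \<omega> + (-1) ^ e * (indicator A2 \<omega> :: real))"
    by (intro Bochner_Integration.integrable_add integrable_mult_right integrable_real_indicator)
       (auto simp: emeasure_eq_measure)
  then show "integrable M (\<lambda>\<omega>. Z \<omega> ^ e)"
    by (rule integrable_cong_AE_imp[OF _ _ AE_eq]) measurable
  have "integral\<^sup>L M (\<lambda>\<omega>. Z \<omega> ^ e)
          = integral\<^sup>L M (\<lambda>\<omega>. indicator A1 \<omega> + (-1) ^ e * (indicator A2 \<omega> :: real))"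
    by (rule integral_cong_AE[OF _ _ AE_eq, symmetric]) measurable
  also have "\<dots> = prob A1 + (-1) ^ e * prob A2"
    by (subst Bochner_Integration.integral_add)
       (auto intro!: integrable_real_indicator simp: emeasure_eq_measure)
  finally show "integral\<^sup>L M (\<lambda>\<omega>. Z \<omega> ^ e)
           = prob {\<omega>\<in>space M. Z \<omega> = 1} + (-1) ^ e * prob {\<omega>\<in>space M. Z \<omega> = -1}"
    by (simp add: A1_def A2_def)
qed

lemma (in prob_space) integral_Xmult_indep:
  assumes indep: "indep_vars (\<lambda>_. borel) X I" and "prime_factors m \<subseteq> I"
    and total: "\<And>p. p \<in> prime_factors m \<Longrightarrow> prob {\<omega>\<in>space M. X p \<omega> = 1}
                  + prob {\<omega>\<in>space M. X p \<omega> = -1} + prob {\<omega>\<in>space M. X p \<omega> = 0} = 1"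
  shows "integral\<^sup>L M (Xmult X m) = (\<Prod>p\<in>prime_factors m. prob {\<omega>\<in>space M. X p \<omega> = 1}
            + (-1) ^ multiplicity p m * prob {\<omega>\<in>space M. X p \<omega> = -1})"
proof -
  have meas: "X p \<in> borel_measurable M" if "p \<in> prime_factors m" for p
    using indep that \<open>prime_factors m \<subseteq> I\<close> unfolding indep_vars_def by auto
  have pos: "multiplicity p m > 0" if "p \<in> prime_factors m" for p
    using that by (auto simp: prime_factors_multiplicity)
  note ternary = integral_power_ternary[OF meas total pos]
  have "indep_vars (\<lambda>_. borel) (\<lambda>p \<omega>. X p \<omega> ^ multiplicity p m) (prime_factors m)"
    by (rule indep_vars_compose2[OF indep_vars_subset[OF indep]]) (use assms(2) in auto)
  then have "integral\<^sup>L M (Xmult X m)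
               = (\<Prod>p\<in>prime_factors m. integral\<^sup>L M (\<lambda>\<omega>. X p \<omega> ^ multiplicity p m))"
    unfolding Xmult_def[abs_def]
    by (rule indep_vars_lebesgue_integral[OF finite_set_mset]) (auto intro: ternary)
  then show ?thesis
    by (simp add: ternary cong: prod.cong)
qed

lemma prime_factors_prod_primes:
  fixes A :: "nat set"
  assumes "finite A" "\<And>p. p \<in> A \<Longrightarrow> prime p"
  shows "prime_factors (\<Prod>A) = A"
proof -
  have "0 \<notin> A"
    using assms(2) by force
  then have "prime_factors (\<Prod>A) = (\<Union>p\<in>A. prime_factors p)"
    using assms(1) by (simp add: prime_factors_prod)
  also have "\<dots> = (\<Union>p\<in>A. {p})"
    using assms by (intro SUP_cong) (simp_all add: prime_prime_factors)
  finally show ?thesis by simp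
qed

lemma multiplicity_div_prime_power:
  fixes x :: nat
  assumes "prime p" "prime q" "x \<noteq> 0"
  shows "multiplicity p (x div q ^ multiplicity q x) = (if p = q then 0 else multiplicity p x)"
proof -
  obtain y where decomp: "x = q ^ multiplicity q x * y" and "\<not> q dvd y"
    using multiplicity_decompose' assms by (metis not_prime_unit)
  have "y \<noteq> 0"
    using decomp assms(3) by (metis mult_0_right)
  have div: "x div q ^ multiplicity q x = y"
    using decomp prime_gt_0_nat[OF assms(2)] by (metis nonzero_mult_div_cancel_left not_gr0 power_not_zero)
  show ?thesis
  proof (cases "p = q")
    case True
    then show ?thesis using \<open>\<not> q dvd y\<close> div by (simp add: not_dvd_imp_multiplicity_0)
  next
    case False
    have "multiplicity p x = multiplicity p (q ^ multiplicity q x) + multiplicity p y"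
      using assms \<open>y \<noteq> 0\<close> by (subst decomp, subst prime_elem_multiplicity_mult_distrib) auto
    then show ?thesis
      using False assms div by (simp add: multiplicity_distinct_prime_power)
  qed
qed

definition odd_odd_primes :: "nat \<Rightarrow> nat set" where
  "odd_odd_primes m = {p \<in> prime_factors m. p \<noteq> 2 \<and> odd (multiplicity p m)}"

lemma m0_eq_prod_odd_odd_primes:
  assumes "m > 0"
  shows "m0 m = \<Prod>(odd_odd_primes m)"
proof -
  have "{p \<in> prime_factors (m div 2 ^ multiplicity 2 m). odd (multiplicity p (m div 2 ^ multiplicity 2 m))}
          = odd_odd_primes m"
    using assms by (auto simp: odd_odd_primes_def prime_factors_multiplicity
                          multiplicity_div_prime_power split: if_splits)
  then show ?thesis
    by (simp add: m0_def sqfree_part_def)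
qed

lemma prod_neg_inverse_odd_odd_primes:
  assumes "m > 0"
  shows "(\<Prod>p\<in>odd_odd_primes m. - 1 / real p) = (-1) ^ omega (m0 m) / real (m0 m)"
proof -
  have "finite (odd_odd_primes m)" and "\<And>p. p \<in> odd_odd_primes m \<Longrightarrow> prime p"
    by (auto simp: odd_odd_primes_def)
  then have "omega (m0 m) = card (odd_odd_primes m)"
    using assms by (simp add: omega_def m0_eq_prod_odd_odd_primes prime_factors_prod_primes)
  moreover have "(\<Prod>p\<in>odd_odd_primes m. - 1 / real p)
                   = (\<Prod>p\<in>odd_odd_primes m. - 1) / (\<Prod>p\<in>odd_odd_primes m. real p)"
    by (rule prod_dividef)
  ultimately show ?thesis
    using assms by (simp add: m0_eq_prod_odd_odd_primes)
qed

lemma prod_prime_factors_split: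
  fixes c :: real and f :: "nat \<Rightarrow> real"
  assumes "m > 0"
  shows "(\<Prod>p\<in>prime_factors m. if p = 2 then c
            else if odd (multiplicity p m) then - 1 / real p else f p)
       = (if odd m then 1 else c) * ((-1) ^ omega (m0 m) / real (m0 m))
          * (\<Prod>p\<in>even_odd_primes m. f p)"
proof -
  have "prime_factors m \<inter> - {p. p = 2} \<inter> {p. odd (multiplicity p m)} = odd_odd_primes m"
    and "prime_factors m \<inter> - {p. p = 2} \<inter> - {p. odd (multiplicity p m)} = even_odd_primes m"
    by (auto simp: odd_odd_primes_def even_odd_primes_def)
  then have "(\<Prod>p\<in>prime_factors m. if p = 2 then c
            else if odd (multiplicity p m) then - 1 / real p else f p)
      = (\<Prod>p\<in>prime_factors m \<inter> {p. p = 2}. c)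
        * ((\<Prod>p\<in>odd_odd_primes m. - 1 / real p) * (\<Prod>p\<in>even_odd_primes m. f p))"
    by (simp add: prod.If_cases)
  also have "prime_factors m \<inter> {p. p = 2} = (if odd m then {} else {2})"
    using assms by (auto simp: in_prime_factors_iff)
  also note prod_neg_inverse_odd_odd_primes[OF assms]
  finally show ?thesis
    by (simp only: mult.assoc) simp
qed

text \<open>The local factor at an odd prime p, with q = p and x = p^s.\<close>

lemma odd_prime_factor_identity:
  fixes q x :: real
  assumes "q \<ge> 3" "x > 1"
  shows "(q - 3) / (2 * q) + 2 / (q * (x + 1)) + (-1) ^ e * ((q - 1) / (2 * q))
       = (if odd e then - 1 / q else (1 - 2 / q) * (1 + 2 * (q - 1) / ((q - 2) * (x - 1))))
         / (1 + 2 / (x - 1))"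
proof (cases "even e")
  case True
  have "q \<noteq> 0" "q - 2 \<noteq> 0" "x - 1 \<noteq> 0" "x + 1 \<noteq> 0"
    using assms by auto
  have sum: "a / q + 2 / (q * c) = (a * c + 2) / (q * c)" if "c \<noteq> 0" for a c
    using that \<open>q \<noteq> 0\<close> by (simp add: field_simps)
  have cancel: "(a / q) * (N / (a * b)) / (c / b) = N / (q * c)"
    if "a \<noteq> 0" "b \<noteq> 0" "c \<noteq> 0" for a b c N
    using that \<open>q \<noteq> 0\<close> by (simp add: field_simps)
  have "(q - 3) / (2 * q) + 2 / (q * (x + 1)) + (q - 1) / (2 * q) = (q - 2) / q + 2 / (q * (x + 1))"
    using \<open>q \<noteq> 0\<close> by (simp add: field_simps)
  also have "\<dots> = ((q - 2) * (x + 1) + 2) / (q * (x + 1))"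
    using \<open>x + 1 \<noteq> 0\<close> by (rule sum)
  also have "(q - 2) * (x + 1) + 2 = (q - 2) * (x - 1) + 2 * (q - 1)"
    by (simp add: algebra_simps)
  also have "((q - 2) * (x - 1) + 2 * (q - 1)) / (q * (x + 1))
      = ((q - 2) / q) * (((q - 2) * (x - 1) + 2 * (q - 1)) / ((q - 2) * (x - 1)))
                    / ((x + 1) / (x - 1))"
    using cancel \<open>q - 2 \<noteq> 0\<close> \<open>x - 1 \<noteq> 0\<close> \<open>x + 1 \<noteq> 0\<close> by simp
  also have "\<dots> = (1 - 2 / q) * (1 + 2 * (q - 1) / ((q - 2) * (x - 1))) / (1 + 2 / (x - 1))"
  proof -
    have "1 - 2 / q = (q - 2) / q" and "1 + 2 / (x - 1) = (x + 1) / (x - 1)"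
      using \<open>q \<noteq> 0\<close> \<open>x - 1 \<noteq> 0\<close> by (simp_all add: field_simps)
    moreover have "1 + 2 * (q - 1) / ((q - 2) * (x - 1))
                     = ((q - 2) * (x - 1) + 2 * (q - 1)) / ((q - 2) * (x - 1))"
      using \<open>q - 2 \<noteq> 0\<close> \<open>x - 1 \<noteq> 0\<close> by (simp add: add_divide_distrib)
    ultimately show ?thesis by simp
  qed
  finally show ?thesis
    using True by simp
next
  case False
  have "(q - 3) / (2 * q) + 2 / (q * (x + 1)) + (-1) ^ e * ((q - 1) / (2 * q))
      = (q - 3) / (2 * q) + 2 / (q * (x + 1)) - (q - 1) / (2 * q)"
    using False by (simp add: minus_divide_left)
  also have "\<dots> = - 1 / q / (1 + 2 / (x - 1))"
    using assms by (simp add: field_split_simps) (smt (z3) mult_pos_pos)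
  finally show ?thesis
    using False by simp
qed

text \<open>The local factor at 2, with y = 2^s and D = 8^s + 2^s + 2.\<close>

lemma two_factor_identity:
  fixes y D :: real
  assumes "y > 1" "D \<noteq> 0"
  shows "1 / D + (-1) ^ e * ((1/2) * (y^3 - y^2 + 2) / D)
       = ((-1) ^ e / 2) * ((y^3 + y^2) / D) * (1 + 2 * (1 + (-1) ^ e) / (y^2 * (y - 1)))
         / (1 + 2 / (y - 1))"
proof -
  have "y \<noteq> 0" "y - 1 \<noteq> 0" "y + 1 \<noteq> 0"
    using assms by auto
  have denom: "1 + 2 / (y - 1) = (y + 1) / (y - 1)" and numer: "y^3 + y^2 = y^2 * (y + 1)"
    using \<open>y - 1 \<noteq> 0\<close> by (simp_all add: field_simps power2_eq_square power3_eq_cube)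
  have cancel: "k * (a * c / D) * (N / (a * b)) / (c / b) = k * N / D"
    if "a \<noteq> 0" "b \<noteq> 0" "c \<noteq> 0" for a b c k N :: real
    using that assms(2) by (simp add: field_simps)
  show ?thesis
  proof (cases "even e")
    case True
    have "1 / D + (-1) ^ e * ((1/2) * (y^3 - y^2 + 2) / D) = (1/2) * (y^2 * (y - 1) + 4) / D"
      using True assms(2) by (simp add: field_simps power2_eq_square power3_eq_cube)
    also have "\<dots> = (1/2) * (y^2 * (y + 1) / D) * ((y^2 * (y - 1) + 4) / (y^2 * (y - 1)))
                      / ((y + 1) / (y - 1))"
      using cancel \<open>y \<noteq> 0\<close> \<open>y - 1 \<noteq> 0\<close> \<open>y + 1 \<noteq> 0\<close> by simp
    also have "(y^2 * (y - 1) + 4) / (y^2 * (y - 1)) = 1 + 2 * 2 / (y^2 * (y - 1))"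
      using \<open>y \<noteq> 0\<close> \<open>y - 1 \<noteq> 0\<close> by (simp add: add_divide_distrib)
    finally show ?thesis
      using True by (simp add: denom numer)
  next
    case False
    have "1 / D + (-1) ^ e * ((1/2) * (y^3 - y^2 + 2) / D) = (- 1 / 2) * (y^2 * (y - 1)) / D"
      using False assms(2) by (simp add: field_simps power2_eq_square power3_eq_cube)
    also have "\<dots> = (- 1 / 2) * (y^2 * (y + 1) / D) * ((y^2 * (y - 1)) / (y^2 * (y - 1)))
                      / ((y + 1) / (y - 1))"
      using cancel \<open>y \<noteq> 0\<close> \<open>y - 1 \<noteq> 0\<close> \<open>y + 1 \<noteq> 0\<close> by simp
    finally show ?thesis
      using False \<open>y \<noteq> 0\<close> \<open>y - 1 \<noteq> 0\<close> by (simp add: denom numer)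
  qed
qed

lemma powr_four_eight: "(4::real) powr s = (2 powr s)^2" "(8::real) powr s = (2 powr s)^3"
  using powr_mult[of 2 2 s] powr_mult[of 2 4 s] by (simp_all add: power2_eq_square power3_eq_cube)

lemma pXs_sum_eq_1:
  assumes "prime p"
  shows "pXs_one s p + pXs_mone s p + pXs_zero s p = 1"
proof (cases "p = 2")
  case True
  define y where "y = (2::real) powr s"
  define D where "D = y^3 + y + 2"
  have "y > 0"
    by (simp add: y_def)
  then have "D \<noteq> 0"
    unfolding D_def by (smt (verit) zero_less_power)
  have half: "2 powr (s - 1) = y / 2"
    by (simp add: y_def powr_diff)
  have "pXs_one s 2 = 1 / D" and "pXs_mone s 2 = (1/2) * (y^3 - y^2 + 2) / D"
    and "pXs_zero s 2 = (y / 2) * (y^2 + y + 2) / D"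
    unfolding pXs_one_def pXs_mone_def pXs_zero_def half
    by (simp_all add: powr_four_eight D_def flip: y_def)
  moreover have "1 / D + (1/2) * (y^3 - y^2 + 2) / D + (y / 2) * (y^2 + y + 2) / D = D / D"
    unfolding D_def by (simp add: add_divide_distrib[symmetric] algebra_simps power2_eq_square power3_eq_cube)
  ultimately show ?thesis
    using True \<open>D \<noteq> 0\<close> by simp
next
  case False
  define q where "q = real p"
  define x where "x = real p powr s"
  have "q \<noteq> 0"
    using assms by (simp add: q_def prime_gt_0_nat)
  have "pXs_one s p + pXs_mone s p + pXs_zero s p
      = (q - 3) / (2 * q) + 2 / (q * (x + 1)) + (q - 1) / (2 * q) + (1 - (1 / q) * (q - 2 + 2 / (x + 1)))"
    using False by (simp add: pXs_one_def pXs_mone_def pXs_zero_def q_def x_def)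
  also have "\<dots> = 1"
  proof -
    have "(q - 3) / (2 * q) + (q - 1) / (2 * q) = (q - 2) / q"
      using \<open>q \<noteq> 0\<close> by (simp add: field_simps)
    moreover have "(1 / q) * (q - 2 + 2 / (x + 1)) = (q - 2) / q + 2 / (q * (x + 1))"
      by (simp add: distrib_left)
    ultimately show ?thesis
      by linarith
  qed
  finally show ?thesis .
qed

lemma pXi_sum_eq_1:
  assumes "prime p"
  shows "pXi_one p + pXi_mone p + pXi_zero p = 1"
  using assms prime_gt_0_nat[of p] unfolding pXi_one_def pXi_mone_def pXi_zero_def
  by (auto simp: field_simps)

lemma pXs_local_factor:
  assumes "s > 0" "p \<in> prime_factors m"
  shows "pXs_one s p + (-1) ^ multiplicity p m * pXs_mone s p
       = (if p = 2 then kappa_t m s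
          else if odd (multiplicity p m) then - 1 / real p
          else (1 - 2 / real p) * (1 + 2 * (real p - 1) / ((real p - 2) * (real p powr s - 1))))
         / (1 + 2 / (real p powr s - 1))"
proof (cases "p = 2")
  case True
  then have "even m"
    using assms(2) by (auto simp: in_prime_factors_iff)
  define e where "e = multiplicity 2 m"
  define y where "y = (2::real) powr s"
  define D where "D = y^3 + y + 2"
  have "y > 1"
    using assms(1) by (simp add: y_def)
  then have "D \<noteq> 0"
    unfolding D_def by (smt (verit) zero_less_power)
  have "pXs_one s 2 = 1 / D" and "pXs_mone s 2 = (1/2) * (y^3 - y^2 + 2) / D"
    and "kappa_t m s = ((-1) ^ e / 2) * ((y^3 + y^2) / D) * (1 + 2 * (1 + (-1) ^ e) / (y^2 * (y - 1)))"
    using \<open>even m\<close> by (simp_all add: pXs_one_def pXs_mone_def kappa_t_def powr_four_eight D_def y_def e_def)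
  then have "pXs_one s 2 + (-1) ^ e * pXs_mone s 2 = kappa_t m s / (1 + 2 / (2 powr s - 1))"
    using two_factor_identity[OF \<open>y > 1\<close> \<open>D \<noteq> 0\<close>] by (simp add: y_def)
  with True show ?thesis
    by (simp add: e_def)
next
  case False
  have "real p \<ge> 3"
    using assms(2) False prime_ge_2_nat[of p] by (auto simp: in_prime_factors_iff)
  moreover have "real p powr s > 1"
    using assms(1) \<open>real p \<ge> 3\<close> by simp
  ultimately show ?thesis
    using False odd_prime_factor_identity by (simp add: pXs_one_def pXs_mone_def)
qed

lemma pXi_local_factor:
  assumes "p \<in> prime_factors m"
  shows "pXi_one p + (-1) ^ multiplicity p m * pXi_mone p
       = (if p = 2 then a_fun m / 4
          else if odd (multiplicity p m) then - 1 / real p else 1 - 2 / real p)"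
proof (cases "p = 2")
  case True
  then have "even m"
    using assms by (auto simp: in_prime_factors_iff)
  with True show ?thesis
    by (simp add: pXi_one_def pXi_mone_def a_fun_def)
next
  case False
  have "real p > 0"
    using assms by (simp add: in_prime_factors_iff prime_gt_0_nat)
  with False show ?thesis
    by (cases "even (multiplicity p m)") (simp_all add: pXi_one_def pXi_mone_def field_simps)
qed

lemma Xs_model_integral_Xmult:
  assumes model: "Xs_model M s X" and "s > 0" "m > 0"
  shows "integral\<^sup>L M (Xmult X m) = h_fun m s"
proof -
  interpret prob_space M
    using model by (simp add: Xs_model_def)
  have probs: "prob {\<omega>\<in>space M. X p \<omega> = 1} = pXs_one s p"
    "prob {\<omega>\<in>space M. X p \<omega> = -1} = pXs_mone s p"
    "prob {\<omega>\<in>space M. X p \<omega> = 0} = pXs_zero s p" if "p \<in> prime_factors m" for p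
    using model that by (auto simp: Xs_model_def in_prime_factors_iff)
  have "integral\<^sup>L M (Xmult X m)
          = (\<Prod>p\<in>prime_factors m. prob {\<omega>\<in>space M. X p \<omega> = 1}
              + (-1) ^ multiplicity p m * prob {\<omega>\<in>space M. X p \<omega> = -1})"
    using model by (intro integral_Xmult_indep[of X "{p. prime p}"])
                   (auto simp: Xs_model_def probs pXs_sum_eq_1 in_prime_factors_iff)
  also have "\<dots> = (\<Prod>p\<in>prime_factors m. pXs_one s p + (-1) ^ multiplicity p m * pXs_mone s p)"
    by (simp add: probs)
  also have "\<dots> = (\<Prod>p\<in>prime_factors m. (if p = 2 then kappa_t m s
                      else if odd (multiplicity p m) then - 1 / real p
                      else (1 - 2 / real p) * (1 + 2 * (real p - 1) / ((real p - 2) * (real p powr s - 1))))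
                    / (1 + 2 / (real p powr s - 1)))"
    using \<open>s > 0\<close> by (intro prod.cong refl pXs_local_factor)
  also have "\<dots> = h_fun m s"
    using \<open>m > 0\<close>
    by (simp add: prod_dividef prod_prime_factors_split h_fun_def kappa_t_def)
  finally show ?thesis .
qed

lemma Xinf_model_integral_Xmult:
  assumes model: "Xinf_model M X" and "m > 0"
  shows "integral\<^sup>L M (Xmult X m) = ((-1) ^ omega (m0 m) / real (m0 m)) *
           (\<Prod>p\<in>even_odd_primes m. 1 - 2 / real p) * (a_fun m / 4)"
proof -
  interpret prob_space M
    using model by (simp add: Xinf_model_def)
  have probs: "prob {\<omega>\<in>space M. X p \<omega> = 1} = pXi_one p"
    "prob {\<omega>\<in>space M. X p \<omega> = -1} = pXi_mone p"
    "prob {\<omega>\<in>space M. X p \<omega> = 0} = pXi_zero p" if "p \<in> prime_factors m" for p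
    using model that by (auto simp: Xinf_model_def in_prime_factors_iff)
  have "integral\<^sup>L M (Xmult X m)
          = (\<Prod>p\<in>prime_factors m. prob {\<omega>\<in>space M. X p \<omega> = 1}
              + (-1) ^ multiplicity p m * prob {\<omega>\<in>space M. X p \<omega> = -1})"
    using model by (intro integral_Xmult_indep[of X "{p. prime p}"])
                   (auto simp: Xinf_model_def probs pXi_sum_eq_1 in_prime_factors_iff)
  also have "\<dots> = (\<Prod>p\<in>prime_factors m. pXi_one p + (-1) ^ multiplicity p m * pXi_mone p)"
    by (simp add: probs)
  also have "\<dots> = (\<Prod>p\<in>prime_factors m. if p = 2 then a_fun m / 4
                      else if odd (multiplicity p m) then - 1 / real p else 1 - 2 / real p)"
    by (intro prod.cong refl pXi_local_factor)
  also have "\<dots> = ((-1) ^ omega (m0 m) / real (m0 m)) *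
           (\<Prod>p\<in>even_odd_primes m. 1 - 2 / real p) * (a_fun m / 4)"
    using \<open>m > 0\<close> by (simp add: prod_prime_factors_split a_fun_def)
  finally show ?thesis .
qed

theorem lemma16:
  fixes m :: nat
  assumes "m > 0"
  shows "(\<forall>s::real. s > 1/2 \<longrightarrow> (\<forall>(M::'a measure) X. Xs_model M s X \<longrightarrow>
            integral\<^sup>L M (Xmult X m) = h_fun m s))
       \<and> (\<forall>(N::'b measure) Y. Xinf_model N Y \<longrightarrow>
            integral\<^sup>L N (Xmult Y m) =
              ((-1) ^ omega (m0 m) / real (m0 m)) *
              (\<Prod>p\<in>even_odd_primes m. 1 - 2 / real p) * (a_fun m / 4))"
  using assms by (simp add: Xs_model_integral_Xmult Xinf_model_integral_Xmult)

end
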